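(* Let $T>0$, $\mu>0$, $U>0$ with $UJ(T)<\mu/2$. Then every minimizer $(\gamma,\alpha,\rho_0)$ of $\mathcal{F}$ over $\mathcal{D}$ has $\rho_0\neq0$.
   Context: Let $\mathbb{T}^3=[-\pi,\pi]^3$ with periodic identification and normalized Haar measure $dp$. Let $\varepsilon(p)=4\sum_{k=1}^3\sin^2(p_k/2)$. $\mathcal{D}=\{(\gamma,\alpha,\rho_0): \gamma\in L^1(\mathbb{T}^3),\ \gamma\ge0,\ \alpha^2\le\gamma(1+\gamma)\text{ a.e.},\ \rho_0\ge0\}$. With $\beta=\sqrt{(\tfrac12+\gamma)^2-\alpha^2}$, $S(\gamma,\alpha)=\int\big[(\beta+\tfrac12)\ln(\beta+\tfrac12)-(\beta-\tfrac12)\ln(\beta-\tfrac12)\big]dp$, and $\mathcal{F}(\gamma,\alpha,\rho_0)=\int(\varepsilon-\mu)\gamma\,dp-\mu\rho_0-TS(\gamma,\alpha)+\frac U2(\int\alpha)^2+U(\int\gamma)^2+U\rho_0\int\alpha+2U\rho_0\int\gamma+\frac U2\rho_0^2$ (integrals over $\mathbb{T}^3$). $J(T)=\int_{\mathbb{T}^3}(e^{\varepsilon(p)/T}-1)^{-1}dp$. *)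

theory Defs
  imports "HOL-Analysis.Analysis"
begin

type_synonym pt = "real^3"

text \<open>The torus [-pi,pi]^3 (boundary has measure zero, so periodic identification is irrelevant).\<close>
definition Tbox :: "pt set" where
  "Tbox = cbox (\<chi> i. - pi) (\<chi> i. pi)"

text \<open>Integral against normalized Haar measure dp = dp_Lebesgue / (2 pi)^3.\<close>
definition tint :: "(pt \<Rightarrow> real) \<Rightarrow> real" where
  "tint f = (LINT p : Tbox | lborel. f p) / (2 * pi) ^ 3"

definition eps :: "pt \<Rightarrow> real" where
  "eps p = 4 * (\<Sum>k\<in>UNIV. (sin (p $ k / 2))\<^sup>2)"

definition betaf :: "real \<Rightarrow> real \<Rightarrow> real" where
  "betaf g a = sqrt ((1/2 + g)\<^sup>2 - a\<^sup>2)"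

text \<open>Note: ln 0 = 0 in Isabelle, so (b - 1/2) ln (b - 1/2) = 0 at b = 1/2 as intended.\<close>
definition sfun :: "real \<Rightarrow> real" where
  "sfun b = (b + 1/2) * ln (b + 1/2) - (b - 1/2) * ln (b - 1/2)"

definition Sent :: "(pt \<Rightarrow> real) \<Rightarrow> (pt \<Rightarrow> real) \<Rightarrow> real" where
  "Sent \<gamma> \<alpha> = tint (\<lambda>p. sfun (betaf (\<gamma> p) (\<alpha> p)))"

definition Dom :: "((pt \<Rightarrow> real) \<times> (pt \<Rightarrow> real) \<times> real) set" where
  "Dom = {(\<gamma>, \<alpha>, \<rho>0).
      \<gamma> \<in> borel_measurable lborel \<and> \<alpha> \<in> borel_measurable lborel \<and>
      set_integrable lborel Tbox \<gamma> \<and>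
      (AE p \<in> Tbox in lborel. 0 \<le> \<gamma> p) \<and>
      (AE p \<in> Tbox in lborel. (\<alpha> p)\<^sup>2 \<le> \<gamma> p * (1 + \<gamma> p)) \<and>
      0 \<le> \<rho>0}"

definition Ffun :: "real \<Rightarrow> real \<Rightarrow> real \<Rightarrow> (pt \<Rightarrow> real) \<Rightarrow> (pt \<Rightarrow> real) \<Rightarrow> real \<Rightarrow> real" where
  "Ffun T \<mu> U \<gamma> \<alpha> \<rho>0 =
     tint (\<lambda>p. (eps p - \<mu>) * \<gamma> p) - \<mu> * \<rho>0 - T * Sent \<gamma> \<alpha>
     + U / 2 * (tint \<alpha>)\<^sup>2 + U * (tint \<gamma>)\<^sup>2 + U * \<rho>0 * tint \<alpha>
     + 2 * U * \<rho>0 * tint \<gamma> + U / 2 * \<rho>0\<^sup>2"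

definition Jfun :: "real \<Rightarrow> real" where
  "Jfun T = tint (\<lambda>p. 1 / (exp (eps p / T) - 1))"

end

theory Submission
  imports Defs
begin

text \<open>Suppose \<open>\<rho>\<^sub>0 = 0\<close>. Setting \<open>\<alpha> = 0\<close> can only increase the entropy and removes the
  nonnegative term \<open>U/2 (\<integral>\<alpha>)\<^sup>2\<close>; cutting \<open>\<gamma>\<close> down to \<open>min \<gamma> b\<close>, where \<open>b = 1/(exp(\<epsilon>/T) - 1)\<close>
  is the Bose-Einstein occupation, lowers \<open>\<epsilon> \<gamma> - T s(\<gamma>)\<close> pointwise; the removed mass \<open>\<eta>\<close>,
  together with an extra \<open>\<delta> = (\<mu> - 2UJ)/(2U) > 0\<close>, is put into the condensate. As
  \<open>\<integral> min \<gamma> b \<le> J(T)\<close>, the free energy changes by at most \<open>-U/2 (\<eta> - \<delta>)\<^sup>2 - U \<delta>\<^sup>2 < 0\<close>,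
  contradicting minimality. \<open>J(T)\<close> is finite because
  \<open>b \<le> T/\<epsilon> \<le> 9T/|p|\<^sup>2 \<le> 9T \<Prod>\<^sub>i |p\<^sub>i|\<^sup>-\<^sup>2\<^sup>/\<^sup>3\<close> on the torus.\<close>

lemma sin_half_sq_ge:
  fixes x :: real
  assumes "\<bar>x\<bar> \<le> pi"
  shows "x\<^sup>2 / 36 \<le> (sin (x / 2))\<^sup>2"
proof -
  define y where "y = \<bar>x\<bar> / 2"
  have y0: "0 \<le> y" and y2: "y \<le> 2"
    using assms pi_less_4 unfolding y_def by auto
  have "\<bar>sin y - (\<Sum>m<3. sin_coeff m * y ^ m)\<bar> \<le> inverse (fact 3) * \<bar>y\<bar> ^ 3"
    by (rule Maclaurin_sin_bound)
  moreover have "(\<Sum>m<3. sin_coeff m * y ^ m) = y"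
    by (simp add: eval_nat_numeral sin_coeff_def)
  ultimately have "\<bar>sin y - y\<bar> \<le> y ^ 3 / 6"
    using y0 by (simp add: eval_nat_numeral divide_simps)
  moreover have "y ^ 3 \<le> 4 * y"
    using y0 y2 mult_left_mono[of "y\<^sup>2" 4 y] power_mono[of y 2 2]
    by (simp add: power3_eq_cube power2_eq_square mult.commute)
  ultimately have "y / 3 \<le> sin y"
    by linarith
  then have "(y / 3)\<^sup>2 \<le> (sin y)\<^sup>2"
    using y0 by (intro power_mono) auto
  moreover have "(sin (x / 2))\<^sup>2 = (sin y)\<^sup>2"
    unfolding y_def by (cases "x \<ge> 0") (auto simp: power2_eq_square)
  ultimately show ?thesis
    unfolding y_def by (simp add: power2_eq_square)
qed

lemma Tbox_coord: "p \<in> Tbox \<Longrightarrow> p $ i \<in> {-pi..pi}"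
  unfolding Tbox_def mem_box_cart by auto

lemma sets_Tbox [measurable]: "Tbox \<in> sets borel"
  unfolding Tbox_def by simp

lemma eps_nonneg: "0 \<le> eps p"
  unfolding eps_def by (intro mult_nonneg_nonneg sum_nonneg) auto

lemma eps_le_12: "eps p \<le> 12"
proof -
  have "(\<Sum>k\<in>(UNIV::3 set). (sin (p $ k / 2))\<^sup>2) \<le> (\<Sum>k\<in>(UNIV::3 set). 1)"
    by (intro sum_mono) (simp add: abs_square_le_1)
  then show ?thesis
    unfolding eps_def by simp
qed

lemma borel_measurable_eps [measurable]: "eps \<in> borel_measurable borel"
  unfolding eps_def by (intro borel_measurable_continuous_onI continuous_intros) auto

lemma eps_ge_sum_sq:
  assumes "p \<in> Tbox"
  shows "(\<Sum>i\<in>UNIV. (p $ i)\<^sup>2) / 9 \<le> eps p"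
proof -
  have "(\<Sum>i\<in>UNIV. (p $ i)\<^sup>2) / 9 = 4 * (\<Sum>i\<in>UNIV. (p $ i)\<^sup>2 / 36)"
    by (simp add: sum_divide_distrib[symmetric])
  also have "\<dots> \<le> eps p"
  proof (unfold eps_def, intro mult_left_mono sum_mono)
    fix i
    have "\<bar>p $ i\<bar> \<le> pi"
      using Tbox_coord[OF assms, of i] by auto
    then show "(p $ i)\<^sup>2 / 36 \<le> (sin (p $ i / 2))\<^sup>2"
      by (rule sin_half_sq_ge)
  qed simp
  finally show ?thesis .
qed

lemma eps_pos: "p \<in> Tbox \<Longrightarrow> p \<noteq> 0 \<Longrightarrow> 0 < eps p"
proof -
  assume "p \<in> Tbox" "p \<noteq> 0"
  then obtain i where "p $ i \<noteq> 0"
    by (auto simp: vec_eq_iff)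
  then have "0 < (\<Sum>i\<in>UNIV. (p $ i)\<^sup>2)"
    by (intro sum_pos2[of _ i]) auto
  then show "0 < eps p"
    using eps_ge_sum_sq[OF \<open>p \<in> Tbox\<close>] by linarith
qed

definition bose :: "real \<Rightarrow> pt \<Rightarrow> real" where
  "bose T p = 1 / (exp (eps p / T) - 1)"

lemma Jfun_eq_tint_bose: "Jfun T = tint (bose T)"
  unfolding Jfun_def bose_def ..

lemma borel_measurable_bose [measurable]: "bose T \<in> borel_measurable borel"
  unfolding bose_def[abs_def] by measurable

lemma bose_nonneg: "0 < T \<Longrightarrow> 0 \<le> bose T p"
  unfolding bose_def using eps_nonneg[of p] by (simp add: divide_nonneg_pos)

lemma bose_le_T_div_eps:
  assumes "0 < T" "0 < eps p"
  shows "bose T p \<le> T / eps p"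
proof -
  have "eps p / T \<le> exp (eps p / T) - 1"
    using exp_ge_add_one_self[of "eps p / T"] by linarith
  then have "1 / (exp (eps p / T) - 1) \<le> 1 / (eps p / T)"
    using assms by (intro divide_left_mono) auto
  then show ?thesis
    unfolding bose_def by simp
qed

lemma inverse_sum_le_prod_powr:
  fixes a :: "'n::finite \<Rightarrow> real"
  assumes pos: "\<And>i. 0 < a i"
  shows "1 / (\<Sum>i\<in>UNIV. a i) \<le> (\<Prod>i\<in>UNIV. a i powr (- 1 / CARD('n)))"
proof -
  define S where "S = (\<Sum>i\<in>UNIV. a i)"
  have "0 < S"
    unfolding S_def using pos by (intro sum_pos) auto
  have "a i \<le> S" for i
    unfolding S_def using pos by (intro member_le_sum) (auto intro: less_imp_le)
  have "1 / S = (\<Prod>i\<in>(UNIV::'n set). S powr (- 1 / CARD('n)))"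
    using \<open>0 < S\<close> by (simp add: powr_power powr_neg_one)
  also have "\<dots> \<le> (\<Prod>i\<in>UNIV. a i powr (- 1 / CARD('n)))"
    using pos \<open>\<And>i. a i \<le> S\<close> by (intro prod_mono conjI powr_mono2') auto
  finally show ?thesis
    unfolding S_def .
qed

lemma bose_le_prod_abs_powr:
  assumes "0 < T" "p \<in> Tbox" and nz: "\<And>i. p $ i \<noteq> 0"
  shows "bose T p \<le> 9 * T * (\<Prod>i\<in>UNIV. \<bar>p $ i\<bar> powr (-2/3))"
proof -
  define Q where "Q = (\<Sum>i\<in>UNIV. (p $ i)\<^sup>2)"
  have "0 < Q"
    unfolding Q_def using nz by (intro sum_pos) auto
  have "Q / 9 \<le> eps p"
    using eps_ge_sum_sq[OF \<open>p \<in> Tbox\<close>] unfolding Q_def .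
  have "bose T p \<le> T / eps p"
    using assms \<open>0 < Q\<close> \<open>Q / 9 \<le> eps p\<close> by (intro bose_le_T_div_eps) auto
  also have "\<dots> \<le> 9 * T * (1 / Q)"
    using \<open>0 < T\<close> \<open>0 < Q\<close> \<open>Q / 9 \<le> eps p\<close> by (simp add: divide_simps)
  also have "\<dots> \<le> 9 * T * (\<Prod>i\<in>UNIV. ((p $ i)\<^sup>2) powr (-1/3))"
    unfolding Q_def using \<open>0 < T\<close> nz inverse_sum_le_prod_powr[of "\<lambda>i. (p $ i)\<^sup>2"]
    by (intro mult_left_mono) auto
  also have "(\<Prod>i\<in>UNIV. ((p $ i)\<^sup>2) powr (-1/3)) = (\<Prod>i\<in>UNIV. \<bar>p $ i\<bar> powr (-2/3))"
  proof (intro prod.cong refl)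
    fix i
    have "\<bar>p $ i\<bar> powr (-2/3) = (\<bar>p $ i\<bar> powr 2) powr (-1/3)"
      by (subst powr_powr) simp
    also have "\<bar>p $ i\<bar> powr 2 = (p $ i)\<^sup>2"
      using nz[of i] by (simp add: powr_numeral)
    finally show "((p $ i)\<^sup>2) powr (-1/3) = \<bar>p $ i\<bar> powr (-2/3)"
      by simp
  qed
  finally show ?thesis .
qed

lemma abs_powr_integrable_on:
  fixes a c :: real
  assumes "-1 < a" "0 \<le> c"
  shows "(\<lambda>x. \<bar>x\<bar> powr a) integrable_on {-c..c}"
proof -
  have right: "(\<lambda>x. \<bar>x\<bar> powr a) integrable_on {0..c}"
    by (rule integrable_eq[OF integrable_on_powr_from_0[OF assms]]) auto
  then have "(\<lambda>x. \<bar>-x\<bar> powr a) integrable_on {-c..-0}"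
    by (subst Henstock_Kurzweil_Integration.integrable_reflect_real)
  then have "(\<lambda>x. \<bar>x\<bar> powr a) integrable_on {-c..0}"
    by simp
  then show ?thesis
    using right assms(2) by (intro Henstock_Kurzweil_Integration.integrable_combine[of "-c" 0 c]) auto
qed

text \<open>The value \<open>\<top>\<close> at the pole makes \<open>bose_le_pole_majorant\<close> hold on the whole torus, so no
  null set of coordinate hyperplanes has to be removed.\<close>

definition pole_majorant :: "real \<Rightarrow> ennreal" where
  "pole_majorant x =
     (if x = 0 then top else ennreal (\<bar>x\<bar> powr (-2/3))) * indicator {-pi..pi} x"

lemma borel_measurable_pole_majorant [measurable]: "pole_majorant \<in> borel_measurable borel"
  unfolding pole_majorant_def by measurable

lemma nn_integral_pole_majorant_finite: "(\<integral>\<^sup>+x. pole_majorant x \<partial>lborel) < top"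
proof -
  have "(\<integral>\<^sup>+x. pole_majorant x \<partial>lborel)
      = (\<integral>\<^sup>+x. ennreal (\<bar>x\<bar> powr (-2/3)) * indicator {-pi..pi} x \<partial>lborel)"
    using AE_lborel_singleton[of "0::real"]
    by (intro nn_integral_cong_AE) (auto simp: pole_majorant_def)
  also have "\<dots> = ennreal (integral {-pi..pi} (\<lambda>x::real. \<bar>x\<bar> powr (-2/3)))"
    using integrable_integral[OF abs_powr_integrable_on[of "-2/3" pi]]
    by (intro nn_integral_has_integral_lebesgue') auto
  finally show ?thesis
    by simp
qed

lemma bose_le_pole_majorant:
  assumes "0 < T" "p \<in> Tbox"
  shows "ennreal (bose T p) \<le> ennreal (9 * T) * (\<Prod>i\<in>UNIV. pole_majorant (p $ i))"
proof (cases "\<exists>i. p $ i = 0")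
  case True
  then have "(\<Prod>i\<in>UNIV. pole_majorant (p $ i)) = top"
    using Tbox_coord[OF assms(2)]
    by (subst ennreal_prod_eq_top) (auto simp: pole_majorant_def)
  then show ?thesis
    using assms(1) by (simp add: ennreal_mult_top)
next
  case False
  have "(\<Prod>i\<in>UNIV. pole_majorant (p $ i)) = ennreal (\<Prod>i\<in>UNIV. \<bar>p $ i\<bar> powr (-2/3))"
    using False Tbox_coord[OF assms(2)]
    by (simp add: pole_majorant_def prod_ennreal)
  then show ?thesis
    using bose_le_prod_abs_powr[OF assms] False assms(1)
    by (simp add: ennreal_mult[symmetric] prod_nonneg ennreal_leI)
qed

lemma prod_Basis_vec3: "(\<Prod>b\<in>(Basis::pt set). f (p \<bullet> b)) = (\<Prod>i\<in>UNIV. f (p $ i))"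
proof -
  have Basis_eq: "(Basis :: pt set) = range (\<lambda>i. axis i 1)"
    by (auto simp: Basis_vec_def)
  have "inj (\<lambda>i::3. axis i (1::real))"
    by (auto simp: inj_def axis_eq_axis)
  then show ?thesis
    unfolding Basis_eq by (subst prod.reindex) (auto simp: inner_axis)
qed

lemma set_integrable_bose:
  assumes "0 < T"
  shows "set_integrable lborel Tbox (bose T)"
  unfolding set_integrable_def
proof (rule integrableI_nonneg)
  show "AE x in lborel. 0 \<le> indicator Tbox x *\<^sub>R bose T x"
    using bose_nonneg[OF assms] by (auto simp: indicator_def)
  have "(\<integral>\<^sup>+x. ennreal (indicator Tbox x *\<^sub>R bose T x) \<partial>lborel)
      \<le> (\<integral>\<^sup>+x. ennreal (9 * T) * (\<Prod>b\<in>(Basis::pt set). pole_majorant (x \<bullet> b)) \<partial>lborel)"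
    using bose_le_pole_majorant[OF assms]
    by (intro nn_integral_mono) (auto simp: indicator_def prod_Basis_vec3)
  also have "\<dots> = ennreal (9 * T) * (\<integral>\<^sup>+x. (\<Prod>b\<in>(Basis::pt set). pole_majorant (x \<bullet> b)) \<partial>lborel)"
    by (rule nn_integral_cmult) measurable
  also have "\<dots> = ennreal (9 * T) * (\<integral>\<^sup>+x. pole_majorant x \<partial>lborel) ^ 3"
    by (subst nn_integral_lborel_prod) auto
  also have "\<dots> < top"
    using nn_integral_pole_majorant_finite
    by (simp add: ennreal_mult_less_top power_less_top_ennreal)
  finally show "(\<integral>\<^sup>+x. ennreal (indicator Tbox x *\<^sub>R bose T x) \<partial>lborel) < \<infinity>"
    by simp
qed simp

definition bose_entropy :: "real \<Rightarrow> real" where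
  "bose_entropy g = (g + 1) * ln (g + 1) - g * ln g"

lemma sfun_eq_bose_entropy: "sfun b = bose_entropy (b - 1/2)"
  unfolding sfun_def bose_entropy_def by (simp add: algebra_simps)

lemma sfun_betaf_zero: "0 \<le> g \<Longrightarrow> sfun (betaf g 0) = bose_entropy g"
  unfolding betaf_def by (simp add: sfun_eq_bose_entropy)

lemma bose_entropy_eq: "0 < g \<Longrightarrow> bose_entropy g = ln (1 + g) + g * ln (1 + 1 / g)"
  unfolding bose_entropy_def by (simp add: ln_div field_simps)

lemma bose_entropy_nonneg: "0 \<le> g \<Longrightarrow> 0 \<le> bose_entropy g"
proof (cases "g = 0")
  case False
  assume "0 \<le> g"
  then have "0 < g"
    using False by simp
  then show ?thesis
    by (simp add: bose_entropy_eq)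
qed (simp add: bose_entropy_def)

lemma bose_entropy_le: "0 \<le> g \<Longrightarrow> bose_entropy g \<le> g + 1"
proof (cases "g = 0")
  case False
  assume "0 \<le> g"
  then have "0 < g"
    using False by simp
  have "g * ln (1 + 1 / g) \<le> g * (1 / g)"
    using \<open>0 < g\<close> by (intro mult_left_mono ln_add_one_self_le_self) auto
  then show ?thesis
    using \<open>0 < g\<close> ln_add_one_self_le_self[of g] by (simp add: bose_entropy_eq)
qed (simp add: bose_entropy_def)

lemma has_real_derivative_bose_entropy:
  "0 < t \<Longrightarrow> (bose_entropy has_real_derivative ln (1 + 1 / t)) (at t)"
  unfolding bose_entropy_def[abs_def]
  by (auto intro!: derivative_eq_intros simp: ln_div field_simps)

lemma continuous_on_bose_entropy: "0 < a \<Longrightarrow> continuous_on {a..b} bose_entropy"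
  unfolding bose_entropy_def by (intro continuous_intros) auto

lemma bose_entropy_mono:
  assumes "0 \<le> x" "x \<le> y"
  shows "bose_entropy x \<le> bose_entropy y"
proof (cases "x = 0")
  case True
  then show ?thesis
    using bose_entropy_nonneg[of y] assms by (simp add: bose_entropy_def)
next
  case False
  then have "0 < x"
    using assms by simp
  show ?thesis
  proof (rule DERIV_nonneg_imp_increasing_open[OF assms(2) _ continuous_on_bose_entropy[OF \<open>0 < x\<close>]])
    fix t
    assume "x < t"
    then show "\<exists>d. (bose_entropy has_real_derivative d) (at t) \<and> 0 \<le> d"
      using \<open>0 < x\<close> has_real_derivative_bose_entropy[of t] by auto
  qed
qed

lemma sfun_betaf_bounds:
  assumes "0 \<le> g" "a\<^sup>2 \<le> g * (1 + g)"
  shows "0 \<le> sfun (betaf g a)" and "sfun (betaf g a) \<le> bose_entropy g"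
proof -
  have "(1/2)\<^sup>2 \<le> (1/2 + g)\<^sup>2 - a\<^sup>2"
    using assms by (simp add: power2_eq_square algebra_simps)
  then have lo: "1/2 \<le> betaf g a"
    unfolding betaf_def using real_sqrt_le_mono by fastforce
  have "betaf g a \<le> sqrt ((1/2 + g)\<^sup>2)"
    unfolding betaf_def by (intro real_sqrt_le_mono) simp
  then have hi: "betaf g a \<le> 1/2 + g"
    using assms(1) by simp
  show "0 \<le> sfun (betaf g a)"
    using lo by (simp add: sfun_eq_bose_entropy bose_entropy_nonneg)
  show "sfun (betaf g a) \<le> bose_entropy g"
    using lo hi by (simp add: sfun_eq_bose_entropy bose_entropy_mono)
qed

text \<open>The derivative \<open>e - T ln (1 + 1/t)\<close> of \<open>t \<mapsto> e t - T bose_entropy t\<close> vanishes at \<open>t = b\<close>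
  and is nonnegative beyond it.\<close>

lemma free_energy_density_min_bose_le:
  assumes "0 < e" "0 < T" "0 \<le> g"
  defines "b \<equiv> 1 / (exp (e / T) - 1)"
  shows "e * min g b - T * bose_entropy (min g b) \<le> e * g - T * bose_entropy g"
proof (cases "g \<le> b")
  case False
  have "1 < exp (e / T)"
    using assms by simp
  then have "0 < b"
    unfolding b_def by simp
  have "e * b - T * bose_entropy b \<le> e * g - T * bose_entropy g"
  proof (rule DERIV_nonneg_imp_increasing_open[of b g "\<lambda>t. e * t - T * bose_entropy t"])
    show "b \<le> g"
      using False by simp
    show "continuous_on {b..g} (\<lambda>t. e * t - T * bose_entropy t)"
      using continuous_on_bose_entropy[OF \<open>0 < b\<close>] by (intro continuous_intros) auto
    fix t
    assume "b < t"
    then have "ln (1 + 1 / t) \<le> ln (1 + 1 / b)"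
      using \<open>0 < b\<close> by (simp add: frac_le add_pos_pos)
    also have "1 + 1 / b = exp (e / T)"
      unfolding b_def using \<open>1 < exp (e / T)\<close> by simp
    finally have "T * ln (1 + 1 / t) \<le> e"
      using assms(2) by (simp add: field_simps)
    then show "\<exists>d. ((\<lambda>t. e * t - T * bose_entropy t) has_real_derivative d) (at t) \<and> 0 \<le> d"
      using \<open>0 < b\<close> \<open>b < t\<close>
      by (auto intro!: exI derivative_eq_intros has_real_derivative_bose_entropy
          simp: mult.commute)
  qed
  then show ?thesis
    using False by simp
qed simp

lemma tint_diff:
  "set_integrable lborel Tbox f \<Longrightarrow> set_integrable lborel Tbox g \<Longrightarrow>
    tint (\<lambda>p. f p - g p) = tint f - tint g"
  unfolding tint_def by (simp add: set_integral_diff diff_divide_distrib)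

lemma tint_cmult: "tint (\<lambda>p. c * f p) = c * tint f"
  unfolding tint_def by simp

lemma tint_mono_AE:
  "set_integrable lborel Tbox f \<Longrightarrow> set_integrable lborel Tbox g \<Longrightarrow>
    (AE p\<in>Tbox in lborel. f p \<le> g p) \<Longrightarrow> tint f \<le> tint g"
  unfolding tint_def by (intro divide_right_mono set_integral_mono_AE) auto

lemma tint_nonneg_AE:
  assumes "AE p\<in>Tbox in lborel. 0 \<le> f p"
  shows "0 \<le> tint f"
  unfolding tint_def set_lebesgue_integral_def
proof (intro divide_nonneg_pos integral_nonneg_AE)
  show "AE x in lborel. 0 \<le> indicator Tbox x *\<^sub>R f x"
    using assms by eventually_elim (auto simp: indicator_def)
qed simp

lemma tint_cong_AE:
  assumes "f \<in> borel_measurable lborel" "g \<in> borel_measurable lborel"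
    and "AE p\<in>Tbox in lborel. f p = g p"
  shows "tint f = tint g"
  unfolding tint_def using assms by (subst set_lebesgue_integral_cong_AE[of Tbox lborel f g]) auto

lemma set_integrable_const_Tbox: "set_integrable lborel Tbox (\<lambda>p. c :: real)"
  unfolding set_integrable_def
  by (rule integrableI_bounded_set_indicator[where B="\<bar>c\<bar>"])
     (use emeasure_bounded_finite[of Tbox] in \<open>auto simp: Tbox_def infinity_ennreal_def\<close>)

lemma set_integrable_bose_entropy_comp:
  assumes [measurable]: "g \<in> borel_measurable lborel"
    and "set_integrable lborel Tbox g" "AE p\<in>Tbox in lborel. 0 \<le> g p"
  shows "set_integrable lborel Tbox (\<lambda>p. bose_entropy (g p))"
proof (rule set_integrable_bound[where f="\<lambda>p. g p + 1"])
  show "set_integrable lborel Tbox (\<lambda>p. g p + 1)"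
    using set_integral_add(1)[OF assms(2) set_integrable_const_Tbox[of 1]] by simp
  show "set_borel_measurable lborel Tbox (\<lambda>p. bose_entropy (g p))"
    unfolding set_borel_measurable_def bose_entropy_def by measurable
  show "AE x in lborel. x \<in> Tbox \<longrightarrow> norm (bose_entropy (g x)) \<le> norm (g x + 1)"
    using assms(3) by eventually_elim (use bose_entropy_nonneg bose_entropy_le in auto)
qed

lemma set_integrable_eps_mult:
  assumes [measurable]: "g \<in> borel_measurable lborel" and "set_integrable lborel Tbox g"
  shows "set_integrable lborel Tbox (\<lambda>p. eps p * g p)"
proof (rule set_integrable_bound[where f="\<lambda>p. 12 * g p"])
  show "set_integrable lborel Tbox (\<lambda>p. 12 * g p)"
    using assms(2) by simp
  show "set_borel_measurable lborel Tbox (\<lambda>p. eps p * g p)"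
    unfolding set_borel_measurable_def by measurable
  show "AE x in lborel. x \<in> Tbox \<longrightarrow> norm (eps x * g x) \<le> norm (12 * g x)"
    using eps_le_12 eps_nonneg by (auto simp: abs_mult intro!: mult_right_mono)
qed

lemma Sent_zero:
  assumes [measurable]: "g \<in> borel_measurable lborel"
    and "AE p\<in>Tbox in lborel. 0 \<le> g p"
  shows "Sent g (\<lambda>_. 0) = tint (\<lambda>p. bose_entropy (g p))"
  unfolding Sent_def
proof (rule tint_cong_AE)
  show "(\<lambda>p. sfun (betaf (g p) 0)) \<in> borel_measurable lborel"
    unfolding sfun_def betaf_def by measurable
  show "(\<lambda>p. bose_entropy (g p)) \<in> borel_measurable lborel"
    unfolding bose_entropy_def by measurable
  show "AE p\<in>Tbox in lborel. sfun (betaf (g p) 0) = bose_entropy (g p)"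
    using assms(2) by eventually_elim (auto simp: sfun_betaf_zero)
qed

text \<open>If the entropy density is not integrable, \<open>Sent\<close> takes the junk value \<open>0\<close>, which the
  bound still respects because \<open>bose_entropy \<circ> g\<close> has nonnegative integral.\<close>

lemma Sent_le_Sent_zero:
  assumes [measurable]: "g \<in> borel_measurable lborel" "a \<in> borel_measurable lborel"
    and g_int: "set_integrable lborel Tbox g"
    and g_nonneg: "AE p\<in>Tbox in lborel. 0 \<le> g p"
    and a_bound: "AE p\<in>Tbox in lborel. (a p)\<^sup>2 \<le> g p * (1 + g p)"
  shows "Sent g a \<le> Sent g (\<lambda>_. 0)"
proof (cases "set_integrable lborel Tbox (\<lambda>p. sfun (betaf (g p) (a p)))")
  case True
  have "Sent g a \<le> tint (\<lambda>p. bose_entropy (g p))"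
    unfolding Sent_def
    using True set_integrable_bose_entropy_comp[OF assms(1) g_int g_nonneg]
  proof (rule tint_mono_AE)
    show "AE p\<in>Tbox in lborel. sfun (betaf (g p) (a p)) \<le> bose_entropy (g p)"
      using g_nonneg a_bound by eventually_elim (use sfun_betaf_bounds in auto)
  qed
  then show ?thesis
    using Sent_zero[OF assms(1) g_nonneg] by simp
next
  case False
  then have "Sent g a = 0"
    unfolding Sent_def tint_def set_lebesgue_integral_def set_integrable_def
    by (simp add: not_integrable_integral_eq)
  moreover have "0 \<le> tint (\<lambda>p. bose_entropy (g p))"
    by (rule tint_nonneg_AE) (use g_nonneg in \<open>eventually_elim, simp add: bose_entropy_nonneg\<close>)
  ultimately show ?thesis
    using Sent_zero[OF assms(1) g_nonneg] by simp
qed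

definition ideal_free_energy :: "real \<Rightarrow> (pt \<Rightarrow> real) \<Rightarrow> real" where
  "ideal_free_energy T g = tint (\<lambda>p. eps p * g p - T * bose_entropy (g p))"

lemma tint_kinetic_minus_entropy:
  assumes [measurable]: "g \<in> borel_measurable lborel"
    and g_int: "set_integrable lborel Tbox g" and g_nonneg: "AE p\<in>Tbox in lborel. 0 \<le> g p"
  shows "tint (\<lambda>p. (eps p - \<mu>) * g p) - T * Sent g (\<lambda>_. 0) = ideal_free_energy T g - \<mu> * tint g"
proof -
  have eps_int: "set_integrable lborel Tbox (\<lambda>p. eps p * g p)"
    by (rule set_integrable_eps_mult[OF assms(1) g_int])
  have "tint (\<lambda>p. (eps p - \<mu>) * g p) = tint (\<lambda>p. eps p * g p - \<mu> * g p)"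
    by (simp add: algebra_simps)
  also have "\<dots> = tint (\<lambda>p. eps p * g p) - \<mu> * tint g"
    using g_int by (simp add: tint_diff[OF eps_int] tint_cmult)
  finally show ?thesis
    unfolding ideal_free_energy_def Sent_zero[OF assms(1) g_nonneg]
    using set_integrable_bose_entropy_comp[OF assms]
    by (simp add: tint_diff[OF eps_int] tint_cmult)
qed

lemma DomD:
  assumes "(\<gamma>, \<alpha>, \<rho>) \<in> Dom"
  shows "\<gamma> \<in> borel_measurable lborel" "\<alpha> \<in> borel_measurable lborel"
    and "set_integrable lborel Tbox \<gamma>" "AE p\<in>Tbox in lborel. 0 \<le> \<gamma> p"
    and "AE p\<in>Tbox in lborel. (\<alpha> p)\<^sup>2 \<le> \<gamma> p * (1 + \<gamma> p)" "0 \<le> \<rho>"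
  using assms unfolding Dom_def by auto

lemma Ffun_without_pairing:
  assumes "(g, \<lambda>_. 0, \<rho>) \<in> Dom"
  shows "Ffun T \<mu> U g (\<lambda>_. 0) \<rho> = ideal_free_energy T g - \<mu> * tint g - \<mu> * \<rho>
    + U * (tint g)\<^sup>2 + 2 * U * \<rho> * tint g + U / 2 * \<rho>\<^sup>2"
  using tint_kinetic_minus_entropy[OF DomD(1,3,4)[OF assms], of \<mu> T]
  unfolding Ffun_def by (simp add: tint_def set_lebesgue_integral_def)

lemma Ffun_without_condensate_ge:
  assumes "(\<gamma>, \<alpha>, 0) \<in> Dom" "0 < T" "0 \<le> U"
  shows "ideal_free_energy T \<gamma> - \<mu> * tint \<gamma> + U * (tint \<gamma>)\<^sup>2 \<le> Ffun T \<mu> U \<gamma> \<alpha> 0"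
proof -
  have "T * Sent \<gamma> \<alpha> \<le> T * Sent \<gamma> (\<lambda>_. 0)"
    using Sent_le_Sent_zero[OF DomD(1-5)[OF assms(1)]] assms(2) by simp
  moreover have "0 \<le> U / 2 * (tint \<alpha>)\<^sup>2"
    using assms(3) by simp
  ultimately show ?thesis
    using tint_kinetic_minus_entropy[OF DomD(1,3,4)[OF assms(1)], of \<mu> T]
    unfolding Ffun_def by simp
qed

definition bose_truncation :: "real \<Rightarrow> (pt \<Rightarrow> real) \<Rightarrow> pt \<Rightarrow> real" where
  "bose_truncation T g p = min (g p) (bose T p)"

lemma
  assumes "(\<gamma>, \<alpha>, \<rho>) \<in> Dom" "0 < T"
  shows set_integrable_bose_truncation: "set_integrable lborel Tbox (bose_truncation T \<gamma>)"
    and bose_truncation_nonneg_AE: "AE p\<in>Tbox in lborel. 0 \<le> bose_truncation T \<gamma> p"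
proof -
  note [measurable] = DomD(1)[OF assms(1)]
  show nonneg: "AE p\<in>Tbox in lborel. 0 \<le> bose_truncation T \<gamma> p"
    using DomD(4)[OF assms(1)] by eventually_elim (simp add: bose_truncation_def bose_nonneg assms(2))
  show "set_integrable lborel Tbox (bose_truncation T \<gamma>)"
  proof (rule set_integrable_bound[OF DomD(3)[OF assms(1)]])
    show "set_borel_measurable lborel Tbox (bose_truncation T \<gamma>)"
      unfolding set_borel_measurable_def bose_truncation_def[abs_def] by measurable
    show "AE p in lborel. p \<in> Tbox \<longrightarrow> norm (bose_truncation T \<gamma> p) \<le> norm (\<gamma> p)"
      using nonneg by eventually_elim (auto simp: bose_truncation_def)
  qed
qed

lemma bose_truncation_in_Dom:
  assumes "(\<gamma>, \<alpha>, \<rho>) \<in> Dom" "0 < T" "0 \<le> \<rho>'"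
  shows "(bose_truncation T \<gamma>, \<lambda>_. 0, \<rho>') \<in> Dom"
proof -
  note [measurable] = DomD(1)[OF assms(1)]
  have "bose_truncation T \<gamma> \<in> borel_measurable lborel"
    unfolding bose_truncation_def[abs_def] by measurable
  then show ?thesis
    using set_integrable_bose_truncation[OF assms(1,2)] bose_truncation_nonneg_AE[OF assms(1,2)] assms(3)
    unfolding Dom_def by (auto elim: AE_mp)
qed

lemma tint_bose_truncation_le_Jfun:
  assumes "(\<gamma>, \<alpha>, \<rho>) \<in> Dom" "0 < T"
  shows "tint (bose_truncation T \<gamma>) \<le> Jfun T"
  unfolding Jfun_eq_tint_bose
  using set_integrable_bose_truncation[OF assms] set_integrable_bose[OF assms(2)]
  by (rule tint_mono_AE) (simp add: bose_truncation_def)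

lemma tint_bose_truncation_le:
  assumes "(\<gamma>, \<alpha>, \<rho>) \<in> Dom" "0 < T"
  shows "tint (bose_truncation T \<gamma>) \<le> tint \<gamma>"
  using set_integrable_bose_truncation[OF assms] DomD(3)[OF assms(1)]
  by (rule tint_mono_AE) (simp add: bose_truncation_def)

lemma ideal_free_energy_bose_truncation_le:
  assumes "(\<gamma>, \<alpha>, \<rho>) \<in> Dom" "0 < T"
  shows "ideal_free_energy T (bose_truncation T \<gamma>) \<le> ideal_free_energy T \<gamma>"
proof -
  have "(bose_truncation T \<gamma>, \<lambda>_. 0, 0) \<in> Dom"
    using bose_truncation_in_Dom[OF assms] by simp
  have integrable: "set_integrable lborel Tbox (\<lambda>p. eps p * g p - T * bose_entropy (g p))"
    if "(g, a, r) \<in> Dom" for g a r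
    using set_integrable_eps_mult[OF DomD(1,3)[OF that]]
      set_integrable_bose_entropy_comp[OF DomD(1,3,4)[OF that]]
    by (intro set_integral_diff(1)) auto
  show ?thesis
    unfolding ideal_free_energy_def
    using integrable[OF \<open>(bose_truncation T \<gamma>, \<lambda>_. 0, 0) \<in> Dom\<close>] integrable[OF assms(1)]
  proof (rule tint_mono_AE)
    show "AE p\<in>Tbox in lborel. eps p * bose_truncation T \<gamma> p - T * bose_entropy (bose_truncation T \<gamma> p)
        \<le> eps p * \<gamma> p - T * bose_entropy (\<gamma> p)"
      using DomD(4)[OF assms(1)] AE_lborel_singleton[of "0 :: pt"]
    proof eventually_elim
      case (elim p)
      then show ?case
        using free_energy_density_min_bose_le[OF eps_pos assms(2)]
        by (auto simp: bose_truncation_def bose_def)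
    qed
  qed
qed

lemma condensate_gain:
  fixes U \<mu> J N N' X X' :: real
  assumes "0 < U" "U * J < \<mu> / 2" "N' \<le> J" "N' \<le> N" "X' \<le> X"
  defines "\<rho> \<equiv> N - N' + (\<mu> - 2 * U * J) / (2 * U)"
  shows "X' - \<mu> * N' - \<mu> * \<rho> + U * N'\<^sup>2 + 2 * U * \<rho> * N' + U / 2 * \<rho>\<^sup>2 < X - \<mu> * N + U * N\<^sup>2"
proof -
  define \<eta> where "\<eta> = N - N'"
  define \<delta> where "\<delta> = (\<mu> - 2 * U * J) / (2 * U)"
  have "0 < \<delta>" and \<mu>_eq: "\<mu> = 2 * U * (J + \<delta>)"
    using assms(1,2) unfolding \<delta>_def by (auto simp: field_simps)
  have "\<rho> = \<eta> + \<delta>" "N = N' + \<eta>"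
    unfolding \<rho>_def \<eta>_def \<delta>_def by simp_all
  then have "X' - \<mu> * N' - \<mu> * \<rho> + U * N'\<^sup>2 + 2 * U * \<rho> * N' + U / 2 * \<rho>\<^sup>2 - (X - \<mu> * N + U * N\<^sup>2)
      = (X' - X) - 2 * U * \<delta> * (J - N') - U / 2 * (\<eta> - \<delta>)\<^sup>2 - U * \<delta>\<^sup>2"
    unfolding \<mu>_eq by (simp add: power2_eq_square algebra_simps)
  moreover have "0 \<le> U * \<delta> * (J - N')" "0 < U * \<delta>\<^sup>2"
    using assms(1,3) \<open>0 < \<delta>\<close> by auto
  moreover have "0 \<le> U / 2 * (\<eta> - \<delta>)\<^sup>2"
    using assms(1) by simp
  ultimately show ?thesis
    using assms(5) by linarith
qed

theorem proposition4p4: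
  fixes T \<mu> U :: real and \<gamma> \<alpha> :: "pt \<Rightarrow> real" and \<rho>0 :: real
  assumes "T > 0" and "\<mu> > 0" and "U > 0"
    and "U * Jfun T < \<mu> / 2"
    and "(\<gamma>, \<alpha>, \<rho>0) \<in> Dom"
    and "\<forall>(\<gamma>', \<alpha>', \<rho>0') \<in> Dom. Ffun T \<mu> U \<gamma> \<alpha> \<rho>0 \<le> Ffun T \<mu> U \<gamma>' \<alpha>' \<rho>0'"
  shows "\<rho>0 \<noteq> 0"
proof
  assume "\<rho>0 = 0"
  define \<gamma>' where "\<gamma>' = bose_truncation T \<gamma>"
  define \<rho>' where "\<rho>' = tint \<gamma> - tint \<gamma>' + (\<mu> - 2 * U * Jfun T) / (2 * U)"
  have "tint \<gamma>' \<le> tint \<gamma>" "tint \<gamma>' \<le> Jfun T"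
    unfolding \<gamma>'_def using tint_bose_truncation_le tint_bose_truncation_le_Jfun assms(1,5) by auto
  moreover have "0 \<le> (\<mu> - 2 * U * Jfun T) / (2 * U)"
    using assms(3,4) by (simp add: divide_nonneg_pos)
  ultimately have "0 \<le> \<rho>'"
    unfolding \<rho>'_def by linarith
  then have competitor: "(\<gamma>', \<lambda>_. 0, \<rho>') \<in> Dom"
    unfolding \<gamma>'_def using bose_truncation_in_Dom assms(1,5) by blast
  then have "Ffun T \<mu> U \<gamma> \<alpha> \<rho>0 \<le> Ffun T \<mu> U \<gamma>' (\<lambda>_. 0) \<rho>'"
    using assms(6) by blast
  also have "\<dots> = ideal_free_energy T \<gamma>' - \<mu> * tint \<gamma>' - \<mu> * \<rho>'
      + U * (tint \<gamma>')\<^sup>2 + 2 * U * \<rho>' * tint \<gamma>' + U / 2 * \<rho>'\<^sup>2"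
    by (rule Ffun_without_pairing[OF competitor])
  also have "\<dots> < ideal_free_energy T \<gamma> - \<mu> * tint \<gamma> + U * (tint \<gamma>)\<^sup>2"
    unfolding \<rho>'_def using \<open>tint \<gamma>' \<le> tint \<gamma>\<close> \<open>tint \<gamma>' \<le> Jfun T\<close> assms(1,3,4,5)
    by (intro condensate_gain) (auto simp: \<gamma>'_def ideal_free_energy_bose_truncation_le)
  also have "\<dots> \<le> Ffun T \<mu> U \<gamma> \<alpha> \<rho>0"
    using Ffun_without_condensate_ge assms(1,3,5) \<open>\<rho>0 = 0\<close> by auto
  finally show False
    by simp
qed

end
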